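(* Let $R=[0,1]^2$, $s\in\mathbb{N}$ and $u=2^{-s}$. If $u\le2^{-5/2}$, then the $4$-dimensional volume of the union $\mathcal{B}_{non\text{-}diag}$ of all non-diagonal box pairs satisfies $\mathrm{vol}(\mathcal{B}_{non\text{-}diag})\le\sqrt2\,u^{1/5}$.
   Context: For $p,q\in\mathbb{R}^2$ write $p\le q$ if both coordinates satisfy $\le$. $R$ is split into $2^s\times2^s$ congruent closed squares ("boxes") of side length $u$. A box pair is an ordered pair $(B_1,B_2)$ of boxes, viewed as $B_1\times B_2\subset\mathbb{R}^4$, with centers $c_1,c_2$. Let $\mathcal{L}$ be the set of non-vertical lines in $\mathbb{R}^2$ with positive slope; for $\ell\in\mathcal{L}$ with unit direction vector $a=(a_1,a_2)$ (positive coordinates) set $\hat{\ell}:=\min\{a_1,a_2\}$. A line $\ell\in\mathcal{L}$ traverses $(B_1,B_2)$ if it meets both $B_1$ and $B_2$. A box pair is non-diagonal if $c_1\le c_2$, $\|c_1-c_2\|_2\ge\sqrt u$, and every $\ell\in\mathcal{L}$ traversing $(B_1,B_2)$ satisfies $\hat{\ell}<u^{1/5}$. $\mathrm{vol}$ denotes $4$-dimensional Lebesgue measure. *)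

theory Defs
  imports "HOL-Analysis.Analysis"
begin

definition grid_box :: "real \<Rightarrow> nat \<Rightarrow> nat \<Rightarrow> (real \<times> real) set" where
  "grid_box u i j = cbox (real i * u, real j * u) (real (Suc i) * u, real (Suc j) * u)"

definition box_center :: "real \<Rightarrow> nat \<Rightarrow> nat \<Rightarrow> real \<times> real" where
  "box_center u i j = ((real i + 1/2) * u, (real j + 1/2) * u)"

definition pt_le :: "real \<times> real \<Rightarrow> real \<times> real \<Rightarrow> bool" where
  "pt_le p q \<longleftrightarrow> fst p \<le> fst q \<and> snd p \<le> snd q"

text \<open>Lines in L (non-vertical, positive slope) are
exactly those lines whose unit direction vector can be chosen with both coordinates
positive; that unit direction a is then unique and hat(l) = min a1 a2.\<close>
definition line_through :: "real \<times> real \<Rightarrow> real \<times> real \<Rightarrow> (real \<times> real) set" where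
  "line_through p a = {p + t *\<^sub>R a | t. True}"

definition pos_unit_dir :: "real \<times> real \<Rightarrow> bool" where
  "pos_unit_dir a \<longleftrightarrow> fst a > 0 \<and> snd a > 0 \<and> norm a = 1"

definition traverses :: "(real \<times> real) set \<Rightarrow> (real \<times> real) set \<Rightarrow> (real \<times> real) set \<Rightarrow> bool" where
  "traverses l B1 B2 \<longleftrightarrow> l \<inter> B1 \<noteq> {} \<and> l \<inter> B2 \<noteq> {}"

definition non_diagonal :: "real \<Rightarrow> nat \<times> nat \<Rightarrow> nat \<times> nat \<Rightarrow> bool" where
  "non_diagonal u b1 b2 \<longleftrightarrow>
     (let c1 = box_center u (fst b1) (snd b1); c2 = box_center u (fst b2) (snd b2);
          B1 = grid_box u (fst b1) (snd b1); B2 = grid_box u (fst b2) (snd b2) in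
      pt_le c1 c2 \<and> dist c1 c2 \<ge> sqrt u \<and>
      (\<forall>p a. pos_unit_dir a \<and> traverses (line_through p a) B1 B2
              \<longrightarrow> min (fst a) (snd a) < u powr (1/5)))"

definition B_non_diag :: "nat \<Rightarrow> ((real \<times> real) \<times> (real \<times> real)) set" where
  "B_non_diag s = (let u = 1 / 2 ^ s in
     \<Union> {grid_box u (fst b1) (snd b1) \<times> grid_box u (fst b2) (snd b2) | b1 b2.
         fst b1 < 2 ^ s \<and> snd b1 < 2 ^ s \<and> fst b2 < 2 ^ s \<and> snd b2 < 2 ^ s \<and>
         non_diagonal u b1 b2})"

end

theory Submission
  imports Defs
begin

text \<open>Let N = 2^s and c = sqrt 2 * u powr (1/5).  If a non-diagonal pair has index offsets
k = i2 - i1 and m = j2 - j1, then both are non-negative and min k m \<le> c * max k m: the line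
through the two centres has unit direction (k, m) / norm (k, m), and norm (k, m) \<le> sqrt 2 * max k m.
So every non-diagonal pair is flat (m \<le> c * k) or becomes flat when the coordinates are swapped.
Flat pairs are found by choosing i1 \<le> i2 < N, j1 < N and an offset m \<le> c * i2, which gives
roughly c N^4 / 3 of them.  For u \<le> 2 powr (-5/2) the lower-order terms are absorbed, so there
are at most c N^4 non-diagonal pairs, each of volume u^4 = N^-4.\<close>

lemma box_center_in_grid_box:
  assumes "0 \<le> u"
  shows "box_center u i j \<in> grid_box u i j"
  using assms by (auto simp: box_center_def grid_box_def cbox_Pair_eq mult_right_mono)

lemma pos_unit_dir_sgn:
  fixes v :: "real \<times> real"
  assumes "0 < fst v" "0 < snd v"
  shows "pos_unit_dir (sgn v)"
proof -
  have "0 < norm v" using assms by (auto simp: prod_eq_iff)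
  then show ?thesis
    using assms by (simp add: pos_unit_dir_def sgn_div_norm norm_sgn)
qed

lemma norm_Pair_le_sqrt2_max:
  fixes x y :: real
  shows "norm (x, y) \<le> sqrt 2 * max \<bar>x\<bar> \<bar>y\<bar>"
proof -
  have "x\<^sup>2 \<le> (max \<bar>x\<bar> \<bar>y\<bar>)\<^sup>2" "y\<^sup>2 \<le> (max \<bar>x\<bar> \<bar>y\<bar>)\<^sup>2"
    by (simp_all flip: abs_le_square_iff)
  then have "sqrt (x\<^sup>2 + y\<^sup>2) \<le> sqrt (2 * (max \<bar>x\<bar> \<bar>y\<bar>)\<^sup>2)"
    by (intro real_sqrt_le_mono) simp
  then show ?thesis by (simp add: norm_Pair real_sqrt_mult)
qed

lemma non_diagonal_offsets:
  assumes u: "0 < u" and nd: "non_diagonal u (i1, j1) (i2, j2)"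
  shows "i1 \<le> i2" "j1 \<le> j2"
    and "min (real (i2 - i1)) (real (j2 - j1))
           \<le> sqrt 2 * u powr (1/5) * max (real (i2 - i1)) (real (j2 - j1))"
proof -
  define c1 where "c1 = box_center u i1 j1"
  define c2 where "c2 = box_center u i2 j2"
  have ordered: "pt_le c1 c2"
    and steep: "\<And>p a. pos_unit_dir a \<Longrightarrow>
                   traverses (line_through p a) (grid_box u i1 j1) (grid_box u i2 j2) \<Longrightarrow>
                   min (fst a) (snd a) < u powr (1/5)"
    using nd by (auto simp: non_diagonal_def Let_def c1_def c2_def)
  show ij: "i1 \<le> i2" "j1 \<le> j2"
    using ordered u by (auto simp: pt_le_def c1_def c2_def box_center_def)
  define v where "v = (real (i2 - i1), real (j2 - j1))"
  have "min (fst v) (snd v) \<le> sqrt 2 * u powr (1/5) * max (fst v) (snd v)"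
  proof (cases "fst v = 0 \<or> snd v = 0")
    case True
    then show ?thesis by (auto simp: v_def)
  next
    case False
    then have pos: "0 < fst v" "0 < snd v" by (auto simp: v_def)
    then have norm_pos: "0 < norm v" by (auto simp: prod_eq_iff)
    have "c2 = c1 + (u * norm v) *\<^sub>R sgn v"
      using norm_pos ij
      by (simp add: sgn_div_norm c1_def c2_def box_center_def v_def of_nat_diff algebra_simps)
    then have "c1 \<in> line_through c1 (sgn v)" "c2 \<in> line_through c1 (sgn v)"
      unfolding line_through_def by (metis (mono_tags) add_0_right mem_Collect_eq scaleR_zero_left)+
    then have "traverses (line_through c1 (sgn v)) (grid_box u i1 j1) (grid_box u i2 j2)"
      using box_center_in_grid_box u unfolding traverses_def c1_def c2_def
      by (metis disjoint_iff less_imp_le)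
    then have "min (fst (sgn v)) (snd (sgn v)) < u powr (1/5)"
      using steep pos_unit_dir_sgn[OF pos] by blast
    then have "min (fst v) (snd v) < u powr (1/5) * norm v"
      using norm_pos by (simp add: sgn_div_norm min_def field_simps split: if_splits)
    also have "\<dots> \<le> u powr (1/5) * (sqrt 2 * max (fst v) (snd v))"
      using norm_Pair_le_sqrt2_max[of "fst v" "snd v"] pos by (intro mult_left_mono) auto
    finally show ?thesis by (simp add: mult.assoc mult.left_commute)
  qed
  then show "min (real (i2 - i1)) (real (j2 - j1))
               \<le> sqrt 2 * u powr (1/5) * max (real (i2 - i1)) (real (j2 - j1))"
    by (simp add: v_def)
qed

definition flat_pairs :: "nat \<Rightarrow> real \<Rightarrow> ((nat \<times> nat) \<times> (nat \<times> nat)) set" where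
  "flat_pairs N c = {((i1, j1), (i2, j2)).
     i1 \<le> i2 \<and> i2 < N \<and> j1 \<le> j2 \<and> j1 < N \<and> real (j2 - j1) \<le> c * real i2}"

definition flat_codes :: "nat \<Rightarrow> real \<Rightarrow> (nat \<times> nat \<times> nat \<times> nat) set" where
  "flat_codes N c = (SIGMA i2:{..<N}. {..i2} \<times> {..<N} \<times> {..nat \<lfloor>c * real i2\<rfloor>})"

lemma flat_pairs_subset_image:
  "flat_pairs N c \<subseteq> (\<lambda>(i2, i1, j1, m). ((i1, j1), (i2, j1 + m))) ` flat_codes N c"
proof
  fix p assume "p \<in> flat_pairs N c"
  then obtain i1 j1 i2 j2 where "p = ((i1, j1), (i2, j2))"
    and "i1 \<le> i2" "i2 < N" "j1 \<le> j2" "j1 < N" "real (j2 - j1) \<le> c * real i2"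
    by (auto simp: flat_pairs_def)
  then have "(i2, i1, j1, j2 - j1) \<in> flat_codes N c"
    and "p = (\<lambda>(i2, i1, j1, m). ((i1, j1), (i2, j1 + m))) (i2, i1, j1, j2 - j1)"
    by (auto simp: flat_codes_def le_nat_iff le_floor_iff)
  then show "p \<in> (\<lambda>(i2, i1, j1, m). ((i1, j1), (i2, j1 + m))) ` flat_codes N c"
    by blast
qed

lemma finite_flat_codes: "finite (flat_codes N c)"
  by (simp add: flat_codes_def)

lemma finite_flat_pairs: "finite (flat_pairs N c)"
  by (rule finite_subset[OF flat_pairs_subset_image]) (simp add: finite_flat_codes)

lemma card_flat_pairs_le_sum:
  assumes "0 \<le> c"
  shows "real (card (flat_pairs N c)) \<le> real N * (\<Sum>a<N. (real a + 1) * (c * real a + 1))"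
proof -
  have "card (flat_pairs N c)
          \<le> card ((\<lambda>(i2, i1, j1, m). ((i1, j1), (i2, j1 + m))) ` flat_codes N c)"
    by (rule card_mono[OF _ flat_pairs_subset_image]) (simp add: finite_flat_codes)
  also have "\<dots> \<le> card (flat_codes N c)"
    by (rule card_image_le[OF finite_flat_codes])
  also have "\<dots> = (\<Sum>a<N. (a + 1) * (N * (nat \<lfloor>c * real a\<rfloor> + 1)))"
    by (simp add: flat_codes_def card_SigmaI card_cartesian_product)
  finally have "real (card (flat_pairs N c))
                  \<le> real (\<Sum>a<N. (a + 1) * (N * (nat \<lfloor>c * real a\<rfloor> + 1)))"
    by (rule of_nat_mono)
  also have "\<dots> = (\<Sum>a<N. (real a + 1) * (real N * (real (nat \<lfloor>c * real a\<rfloor>) + 1)))"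
    by (simp only: of_nat_sum of_nat_mult of_nat_add of_nat_1)
  also have "\<dots> \<le> (\<Sum>a<N. (real a + 1) * (real N * (c * real a + 1)))"
    using assms by (intro sum_mono mult_left_mono) auto
  also have "\<dots> = real N * (\<Sum>a<N. (real a + 1) * (c * real a + 1))"
    by (simp add: sum_distrib_left algebra_simps)
  finally show ?thesis .
qed

lemma sum_Suc_times_affine:
  "(\<Sum>a<N. (real a + 1) * (c * real a + 1))
     = c * (real N - 1) * real N * (real N + 1) / 3 + real N * (real N + 1) / 2"
  by (induction N) (simp_all add: field_simps)

lemma card_flat_pairs_le:
  assumes "0 \<le> c" "2 \<le> N" "5 \<le> c * real N"
  shows "2 * real (card (flat_pairs N c)) \<le> c * real N ^ 4"
proof -
  define n where "n = real N"
  have n: "2 \<le> n" "5 \<le> c * n" using assms by (auto simp: n_def)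
  have "3 * (n + 1) \<le> 5 * n" using n by simp
  also have "\<dots> \<le> c * n * n" using n by (intro mult_right_mono) auto
  finally have "n\<^sup>2 * (3 * (n + 1)) \<le> n\<^sup>2 * (c * n * n)" by (intro mult_left_mono) auto
  moreover have "0 \<le> c * n\<^sup>2" using assms by simp
  ultimately have "2 * (n * (c * (n - 1) * n * (n + 1) / 3 + n * (n + 1) / 2)) \<le> c * n ^ 4"
    by (simp add: field_simps power2_eq_square power4_eq_xxxx)
  then show ?thesis
    using card_flat_pairs_le_sum[OF assms(1), of N]
    by (simp add: sum_Suc_times_affine n_def)
qed

definition non_diagonal_pairs :: "nat \<Rightarrow> ((nat \<times> nat) \<times> (nat \<times> nat)) set" where
  "non_diagonal_pairs s = {(b1, b2).
     fst b1 < 2 ^ s \<and> snd b1 < 2 ^ s \<and> fst b2 < 2 ^ s \<and> snd b2 < 2 ^ s \<and>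
     non_diagonal (1 / 2 ^ s) b1 b2}"

lemma finite_non_diagonal_pairs: "finite (non_diagonal_pairs s)"
proof (rule finite_subset)
  show "non_diagonal_pairs s \<subseteq> ({..<2 ^ s} \<times> {..<2 ^ s}) \<times> ({..<2 ^ s} \<times> {..<2 ^ s})"
    by (auto simp: non_diagonal_pairs_def)
qed auto

lemma non_diagonal_pairs_subset:
  assumes "c = sqrt 2 * (1 / 2 ^ s) powr (1/5)"
  shows "non_diagonal_pairs s
           \<subseteq> flat_pairs (2 ^ s) c \<union> map_prod prod.swap prod.swap ` flat_pairs (2 ^ s) c"
proof
  fix p assume "p \<in> non_diagonal_pairs s"
  then obtain i1 j1 i2 j2 where p: "p = ((i1, j1), (i2, j2))"
    and bounds: "i1 < 2 ^ s" "j1 < 2 ^ s" "i2 < 2 ^ s" "j2 < 2 ^ s"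
    and nd: "non_diagonal (1 / 2 ^ s) (i1, j1) (i2, j2)"
    by (auto simp: non_diagonal_pairs_def)
  note offsets = non_diagonal_offsets[OF _ nd, folded assms]
  have "real (j2 - j1) \<le> c * real i2 \<or> real (i2 - i1) \<le> c * real j2"
  proof -
    have "0 \<le> c" using assms by simp
    then have "real (j2 - j1) \<le> c * real (i2 - i1) \<or> real (i2 - i1) \<le> c * real (j2 - j1)"
      using offsets(3) by (auto simp: min_def max_def split: if_splits)
    moreover have "c * real (i2 - i1) \<le> c * real i2" "c * real (j2 - j1) \<le> c * real j2"
      using \<open>0 \<le> c\<close> by (auto intro: mult_left_mono)
    ultimately show ?thesis by linarith
  qed
  moreover have "map_prod prod.swap prod.swap ((j1, i1), (j2, i2)) = p"
    by (simp add: p)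
  ultimately show "p \<in> flat_pairs (2 ^ s) c \<union> map_prod prod.swap prod.swap ` flat_pairs (2 ^ s) c"
    using offsets(1,2) bounds p by (auto simp: flat_pairs_def image_iff)
qed

lemma card_non_diagonal_pairs_le:
  assumes "c = sqrt 2 * (1 / 2 ^ s) powr (1/5)"
  shows "card (non_diagonal_pairs s) \<le> 2 * card (flat_pairs (2 ^ s) c)"
proof -
  let ?F = "flat_pairs (2 ^ s) c"
  have "card (non_diagonal_pairs s) \<le> card (?F \<union> map_prod prod.swap prod.swap ` ?F)"
    by (intro card_mono non_diagonal_pairs_subset assms) (simp add: finite_flat_pairs)
  also have "\<dots> \<le> card ?F + card (map_prod prod.swap prod.swap ` ?F)"
    by (rule card_Un_le)
  also have "\<dots> \<le> 2 * card ?F"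
    using card_image_le[OF finite_flat_pairs] by simp
  finally show ?thesis .
qed

lemma measure_grid_box_pair:
  assumes "0 \<le> u"
  shows "measure lborel (grid_box u i j \<times> grid_box u i' j') = u ^ 4"
proof -
  have "grid_box u i j \<times> grid_box u i' j'
          = cbox ((real i * u, real j * u), (real i' * u, real j' * u))
              ((real (Suc i) * u, real (Suc j) * u), (real (Suc i') * u, real (Suc j') * u))"
    by (simp add: grid_box_def cbox_Pair_eq)
  then show ?thesis
    using assms by (simp add: content_Pair content_real mult_right_mono algebra_simps power4_eq_xxxx)
qed

lemma measure_B_non_diag_le:
  "measure lborel (B_non_diag s) \<le> real (card (non_diagonal_pairs s)) * (1 / 2 ^ s) ^ 4"
proof -
  let ?u = "1 / 2 ^ s :: real"
  define box_pair where
    "box_pair = (\<lambda>(b1, b2). grid_box ?u (fst b1) (snd b1) \<times> grid_box ?u (fst b2) (snd b2))"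
  have "B_non_diag s = (\<Union>p \<in> non_diagonal_pairs s. box_pair p)"
    unfolding B_non_diag_def non_diagonal_pairs_def box_pair_def Let_def by blast
  also have "measure lborel \<dots> \<le> (\<Sum>p \<in> non_diagonal_pairs s. measure lborel (box_pair p))"
    by (rule measure_UNION_le[OF finite_non_diagonal_pairs])
       (auto simp: box_pair_def grid_box_def simp flip: cbox_Pair_eq)
  also have "\<dots> = real (card (non_diagonal_pairs s)) * ?u ^ 4"
    by (simp add: box_pair_def measure_grid_box_pair case_prod_beta)
  finally show ?thesis .
qed

lemma five_mult_le_sqrt2_mult_root5:
  fixes u :: real
  assumes "0 < u" "u \<le> 2 powr (-5/2)"
  shows "5 * u \<le> sqrt 2 * u powr (1/5)"
proof -
  have "u powr (4/5) \<le> (2 powr (-5/2)) powr (4/5)"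
    using assms by (intro powr_mono2) auto
  also have "\<dots> = 2 powr (-2)"
    by (simp add: powr_powr)
  also have "\<dots> = 1/4"
    by (simp add: powr_minus powr_numeral)
  finally have "u powr (4/5) \<le> 1/4" .
  have "5 * u = 5 * u powr (1/5) * u powr (4/5)"
    using assms(1) by (simp flip: powr_add)
  also have "\<dots> \<le> 5 * u powr (1/5) * (1/4)"
    using \<open>u powr (4/5) \<le> 1/4\<close> by (intro mult_left_mono) auto
  also have "\<dots> = 5/4 * u powr (1/5)" by simp
  also have "5/4 \<le> sqrt 2"
    by (rule real_le_rsqrt) (simp add: power2_eq_square)
  finally show ?thesis by (simp add: mult_right_mono)
qed

theorem lemma5:
  fixes s :: nat and u :: real
  assumes "u = 1 / 2 ^ s"
    and "u \<le> 2 powr (-5/2)"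
  shows "measure lborel (B_non_diag s) \<le> sqrt 2 * u powr (1/5)"
proof -
  define N :: nat where "N = 2 ^ s"
  define c where "c = sqrt 2 * u powr (1/5)"
  have u_pos: "0 < u" and u_N: "u * real N = 1"
    using assms(1) by (simp_all add: N_def)
  have "5 = 5 * u * real N" using u_N by simp
  also have "\<dots> \<le> c * real N"
    using five_mult_le_sqrt2_mult_root5[OF u_pos assms(2)] by (simp add: c_def mult_right_mono)
  finally have "5 \<le> c * real N" .
  moreover have "u < 1"
    using assms(2) powr_less_mono[of "-5/2" 0 "2::real"] by simp
  then have "2 \<le> N" using assms(1) by (cases s) (simp_all add: N_def)
  ultimately have flat: "2 * real (card (flat_pairs N c)) \<le> c * real N ^ 4"
    by (intro card_flat_pairs_le) (simp_all add: c_def)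
  have "measure lborel (B_non_diag s) \<le> real (card (non_diagonal_pairs s)) * u ^ 4"
    using measure_B_non_diag_le assms(1) by simp
  also have "\<dots> \<le> 2 * real (card (flat_pairs N c)) * u ^ 4"
    using card_non_diagonal_pairs_le[of c s] u_pos
    by (intro mult_right_mono) (simp_all add: c_def N_def assms(1))
  also have "\<dots> \<le> c * (u * real N) ^ 4"
    using flat u_pos by (simp add: power_mult_distrib mult_right_mono)
  also have "\<dots> = c" using u_N by simp
  finally show ?thesis by (simp add: c_def)
qed

end
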